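(* Let $N\ge 3$ and $p>0$. There exists $C>0$ such that $$\langle L_-W,W\rangle_{L^2(\Gamma)}\ge C\|W\|_{H^1(\Gamma)}^2\quad\text{for every } W\in H^1_\Gamma\cap L^2_c.$$
   Context: Let $\Gamma$ be the star graph of $N$ half-lines joined at a single vertex, each edge parametrized by $x\in[0,\infty)$ with vertex at $x=0$. Functions are real-valued vectors $W=(w_1,\dots,w_N)^T$; $L^2(\Gamma)=\oplus_{j=1}^N L^2(\mathbb{R}^+)$ with $\langle F,G\rangle_{L^2(\Gamma)}=\sum_j\int_0^\infty f_jg_j\,dx$, $H^1(\Gamma)=\oplus_jH^1(\mathbb{R}^+)$, $H^1_\Gamma=\{W\in H^1(\Gamma):w_1(0)=\dots=w_N(0)\}$. Let $\phi(x)=\operatorname{sech}^{1/p}(px)$, $\Phi=\phi\,(1,\dots,1)^T$, and $L^2_c=\{V\in L^2(\Gamma):\langle V,\Phi\rangle_{L^2(\Gamma)}=0\}$. The quadratic form of $L_-=-\Delta+1-(p+1)\Phi^{2p}$ is $\langle L_-W,W\rangle_{L^2(\Gamma)}=\sum_{j=1}^N\int_0^\infty\big[(w_j')^2+w_j^2-(p+1)\phi^{2p}w_j^2\big]dx$ for $W\in H^1_\Gamma$. *)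

theory Defs
  imports "HOL-Analysis.Analysis"
begin

definition L2_half :: "(real \<Rightarrow> real) \<Rightarrow> bool" where
  "L2_half w \<longleftrightarrow> set_borel_measurable lborel {0..} w \<and>
                   set_integrable lborel {0..} (\<lambda>x. (w x)^2)"

text \<open>H1(R+): w (continuous representative) lies in L2 and is absolutely continuous
with derivative w' in L2, i.e. w x = w 0 + integral of w' over [0,x].\<close>
definition H1_half :: "(real \<Rightarrow> real) \<Rightarrow> (real \<Rightarrow> real) \<Rightarrow> bool" where
  "H1_half w w' \<longleftrightarrow> L2_half w \<and> L2_half w' \<and>
     (\<forall>x\<ge>0. set_integrable lborel {0..x} w' \<and> w x = w 0 + (LBINT t:{0..x}. w' t))"

definition phi :: "real \<Rightarrow> real \<Rightarrow> real" where
  "phi p x = (1 / cosh (p * x)) powr (1 / p)"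

definition H1_Gamma :: "nat \<Rightarrow> (nat \<Rightarrow> real \<Rightarrow> real) \<Rightarrow> (nat \<Rightarrow> real \<Rightarrow> real) \<Rightarrow> bool" where
  "H1_Gamma N W W' \<longleftrightarrow> (\<forall>j<N. H1_half (W j) (W' j)) \<and> (\<forall>j<N. W j 0 = W 0 0)"

text \<open>Orthogonality to Phi = phi (1,...,1) in L2(Gamma).\<close>
definition in_L2c :: "nat \<Rightarrow> real \<Rightarrow> (nat \<Rightarrow> real \<Rightarrow> real) \<Rightarrow> bool" where
  "in_L2c N p W \<longleftrightarrow> (\<forall>j<N. L2_half (W j)) \<and>
     (\<Sum>j<N. LBINT x:{0..}. W j x * phi p x) = 0"

definition H1_norm_sq :: "nat \<Rightarrow> (nat \<Rightarrow> real \<Rightarrow> real) \<Rightarrow> (nat \<Rightarrow> real \<Rightarrow> real) \<Rightarrow> real" where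
  "H1_norm_sq N W W' = (\<Sum>j<N. LBINT x:{0..}. (W' j x)^2 + (W j x)^2)"

text \<open>Quadratic form of L_- = -Delta + 1 - (p+1) Phi^(2p).\<close>
definition Lminus_form :: "nat \<Rightarrow> real \<Rightarrow> (nat \<Rightarrow> real \<Rightarrow> real) \<Rightarrow> (nat \<Rightarrow> real \<Rightarrow> real) \<Rightarrow> real" where
  "Lminus_form N p W W' = (\<Sum>j<N. LBINT x:{0..}.
      (W' j x)^2 + (W j x)^2 - (p + 1) * (phi p x) powr (2 * p) * (W j x)^2)"

end

theory Submission
  imports Defs "HOL-Real_Asymp.Real_Asymp"
begin

text \<open>On each edge put \<open>g = w' + tanh (p x) w\<close>. Since \<open>phi' = - tanh (p x) phi\<close> and
  \<open>phi^(2p) = 1 - tanh (p x)^2\<close>, integration by parts turns the integral of \<open>g^2\<close> over \<open>[0, X]\<close>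
  into the quadratic form of \<open>L_-\<close> on \<open>[0, X]\<close> plus the boundary term \<open>tanh (p X) w(X)^2\<close>.
  Moreover \<open>w(x) - w(0) phi(x) = phi(x) \<integral>\<^sub>0\<^sup>x g / phi\<close> and \<open>phi(x) / phi(y) \<le> 2^(1/p) e^(y - x)\<close>
  for \<open>y \<le> x\<close>, so Cauchy-Schwarz and Fubini give \<open>\<parallel>w - w(0) phi\<parallel>^2 \<le> 4^(1/p) \<langle>L_- w, w\<rangle>\<close> on
  every edge. As all edges share the vertex value \<open>w(0)\<close>, orthogonality to \<open>Phi\<close> yields
  \<open>\<parallel>W\<parallel>^2 \<le> \<Sum>\<^sub>j \<parallel>w\<^sub>j - w(0) phi\<parallel>^2\<close>, and the potential term is at most \<open>(p + 1) \<parallel>W\<parallel>^2\<close>;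
  hence \<open>\<parallel>W\<parallel>\<^sub>H\<^sub>1^2 \<le> (1 + (p + 1) 4^(1/p)) \<langle>L_- W, W\<rangle>\<close>.\<close>

section \<open>Set integrals on the real line\<close>

lemma set_borel_measurable_continuous:
  fixes f :: "real \<Rightarrow> real"
  assumes "continuous_on UNIV f" "A \<in> sets lborel"
  shows "set_borel_measurable lborel A f"
proof -
  have [measurable]: "f \<in> borel_measurable lborel"
    using borel_measurable_continuous_onI[OF assms(1)] by simp
  show ?thesis unfolding set_borel_measurable_def using assms(2) by measurable
qed

lemma set_borel_measurable_mult:
  fixes f g :: "real \<Rightarrow> real"
  assumes "set_borel_measurable lborel A f" "set_borel_measurable lborel A g"
  shows "set_borel_measurable lborel A (\<lambda>x. f x * g x)"
proof -
  have "(\<lambda>x. indicator A x *\<^sub>R (f x * g x)) = (\<lambda>x. (indicator A x *\<^sub>R f x) * (indicator A x *\<^sub>R g x))"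
    by (auto simp: indicator_def fun_eq_iff)
  moreover have "(\<lambda>x. (indicator A x *\<^sub>R f x) * (indicator A x *\<^sub>R g x)) \<in> borel_measurable lborel"
    using assms unfolding set_borel_measurable_def by (intro borel_measurable_times) auto
  ultimately show ?thesis unfolding set_borel_measurable_def by simp
qed

lemma set_integrable_imp_set_borel_measurable:
  fixes f :: "real \<Rightarrow> real"
  shows "set_integrable lborel A f \<Longrightarrow> set_borel_measurable lborel A f"
  unfolding set_integrable_def set_borel_measurable_def by (rule borel_measurable_integrable)

lemma set_integrable_mult_bounded:
  fixes f g :: "real \<Rightarrow> real"
  assumes f: "set_integrable lborel A f" and g: "set_borel_measurable lborel A g"
    and bound: "\<And>x. x \<in> A \<Longrightarrow> \<bar>g x\<bar> \<le> B"
  shows "set_integrable lborel A (\<lambda>x. f x * g x)"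
proof (rule set_integrable_bound[of _ _ "\<lambda>x. B * f x"])
  show "set_integrable lborel A (\<lambda>x. B * f x)" using f by auto
  show "set_borel_measurable lborel A (\<lambda>x. f x * g x)"
    by (rule set_borel_measurable_mult[OF set_integrable_imp_set_borel_measurable[OF f] g])
  show "AE x in lborel. x \<in> A \<longrightarrow> norm (f x * g x) \<le> norm (B * f x)"
  proof (intro AE_I2 impI)
    fix x assume "x \<in> A"
    then have "\<bar>f x\<bar> * \<bar>g x\<bar> \<le> \<bar>f x\<bar> * B" "0 \<le> B"
      using bound[of x] by (auto intro: mult_left_mono)
    then show "norm (f x * g x) \<le> norm (B * f x)"
      by (simp add: abs_mult mult.commute)
  qed
qed

lemma set_integrable_mult_square_integrable:
  fixes f g :: "real \<Rightarrow> real"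
  assumes "set_integrable lborel A (\<lambda>x. f x ^ 2)" "set_integrable lborel A (\<lambda>x. g x ^ 2)"
    "set_borel_measurable lborel A f" "set_borel_measurable lborel A g"
  shows "set_integrable lborel A (\<lambda>x. f x * g x)"
proof (rule set_integrable_bound[of _ _ "\<lambda>x. (f x ^ 2 + g x ^ 2) / 2"])
  show "set_integrable lborel A (\<lambda>x. (f x ^ 2 + g x ^ 2) / 2)"
    using set_integral_add(1)[OF assms(1,2)] by auto
  show "set_borel_measurable lborel A (\<lambda>x. f x * g x)"
    by (rule set_borel_measurable_mult[OF assms(3,4)])
  show "AE x in lborel. x \<in> A \<longrightarrow> norm (f x * g x) \<le> norm ((f x ^ 2 + g x ^ 2) / 2)"
  proof (intro AE_I2 impI)
    fix x
    have "0 \<le> (\<bar>f x\<bar> - \<bar>g x\<bar>)^2" by simp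
    then show "norm (f x * g x) \<le> norm ((f x ^ 2 + g x ^ 2) / 2)"
      by (simp add: abs_mult power2_eq_square algebra_simps)
  qed
qed

lemma set_integral_nonneg:
  fixes f :: "real \<Rightarrow> real"
  assumes "set_integrable lborel A f" "\<And>x. x \<in> A \<Longrightarrow> 0 \<le> f x"
  shows "0 \<le> (LBINT x:A. f x)"
  using set_integral_mono[OF _ assms(1), of "\<lambda>_. 0"] assms(2)
  by (simp add: set_integrable_def)

lemma quadratic_nonneg_imp_discriminant_le:
  fixes A B P :: real
  assumes B: "B \<ge> 0" and nonneg: "\<And>c. 0 \<le> A - 2 * c * P + c^2 * B"
  shows "P^2 \<le> A * B"
proof (cases "B = 0")
  case False
  have "0 \<le> A - 2 * (P/B) * P + (P/B)^2 * B" by (rule nonneg)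
  then show ?thesis using B False by (simp add: power2_eq_square field_simps)
next
  case True
  then have "P = 0" using nonneg[of "(A + 1) / (2 * P)"] by (cases "P = 0") (auto simp: field_simps)
  then show ?thesis using True by simp
qed

lemma set_integral_Cauchy_Schwarz:
  fixes a b :: "real \<Rightarrow> real"
  assumes ia: "set_integrable lborel A (\<lambda>x. a x^2)" and ib: "set_integrable lborel A (\<lambda>x. b x^2)"
    and iab: "set_integrable lborel A (\<lambda>x. a x * b x)"
  shows "(LBINT x:A. a x * b x)^2 \<le> (LBINT x:A. a x^2) * (LBINT x:A. b x^2)"
proof (rule quadratic_nonneg_imp_discriminant_le)
  show "0 \<le> (LBINT x:A. b x^2)" by (rule set_integral_nonneg[OF ib]) simp
  fix c :: real
  have i1: "set_integrable lborel A (\<lambda>x. a x^2 - 2 * c * (a x * b x))"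
    using set_integral_diff(1)[OF ia] iab by auto
  have i2: "set_integrable lborel A (\<lambda>x. c^2 * b x^2)" using ib by auto
  have "0 \<le> (LBINT x:A. a x^2 - 2 * c * (a x * b x) + c^2 * b x^2)"
  proof (rule set_integral_nonneg[OF set_integral_add(1)[OF i1 i2]])
    fix x
    have "0 \<le> (a x - c * b x)^2" by simp
    then show "0 \<le> a x^2 - 2 * c * (a x * b x) + c^2 * b x^2"
      by (simp add: power2_eq_square algebra_simps)
  qed
  also have "\<dots> = (LBINT x:A. a x^2) - 2 * c * (LBINT x:A. a x * b x) + c^2 * (LBINT x:A. b x^2)"
    using set_integral_add(2)[OF i1 i2] set_integral_diff(2)[OF ia, of "\<lambda>x. 2 * c * (a x * b x)"] iab
    by simp
  finally show "0 \<le> (LBINT x:A. a x^2) - 2 * c * (LBINT x:A. a x * b x) + c^2 * (LBINT x:A. b x^2)" .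
qed

lemma set_integrable_exp_minus: "set_integrable lborel {0..} (\<lambda>x::real. exp (- x))"
proof -
  have "set_integrable lborel (einterval 0 \<infinity>) (\<lambda>x::real. exp (- x))"
  proof (rule interval_integral_FTC_nonneg(1)[where F="\<lambda>x. - exp (- x)" and A="-1" and B=0])
    show "DERIV (\<lambda>x. - exp (- x)) x :> exp (- x)" for x
      by (auto intro!: derivative_eq_intros)
    show "(((\<lambda>x. - exp (- x)) \<circ> real_of_ereal) \<longlongrightarrow> -1) (at_right 0)"
      by (auto simp: zero_ereal_def ereal_tendsto_simps intro!: tendsto_eq_intros)
    show "(((\<lambda>x. - exp (- x)) \<circ> real_of_ereal) \<longlongrightarrow> 0) (at_left \<infinity>)"
      unfolding ereal_tendsto_simps by real_asymp
  qed (auto intro!: continuous_intros)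
  then have "set_integrable lborel {0<..} (\<lambda>x::real. exp (- x))"
    by (simp add: zero_ereal_def)
  then show ?thesis
    by (subst set_integrable_discrete_difference[where X="{0}"]) auto
qed

lemma nonneg_set_integrable_not_eventually_ge:
  fixes S :: "real \<Rightarrow> real"
  assumes S: "set_integrable lborel {0..} S" and S_nonneg: "\<And>x. 0 \<le> S x" and eps: "\<epsilon> > 0"
  shows "\<not> eventually (\<lambda>X. \<epsilon> \<le> S X) at_top"
proof
  assume "eventually (\<lambda>X. \<epsilon> \<le> S X) at_top"
  then obtain X0 where X0: "X0 \<ge> 0" "\<And>X. X \<ge> X0 \<Longrightarrow> \<epsilon> \<le> S X"
    unfolding eventually_at_top_linorder by (metis order.trans max.cobounded1 max.cobounded2)
  define T where "T = (LBINT x:{0..}. S x)"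
  define M where "M = T / \<epsilon> + 1"
  have "M \<ge> 0" unfolding M_def using set_integral_nonneg[OF S] S_nonneg eps T_def by simp
  have S_interval: "set_integrable lborel {X0..X0+M} S"
    by (rule set_integrable_subset[OF S]) (use X0 in auto)
  have "M * \<epsilon> = (LBINT x:{X0..X0+M}. \<epsilon>)"
    using set_integral_const[of "{X0..X0+M}" lborel \<epsilon>] \<open>M \<ge> 0\<close> by simp
  also have "\<dots> \<le> (LBINT x:{X0..X0+M}. S x)"
    by (rule set_integral_mono[OF _ S_interval]) (auto intro: X0(2) borel_integrable_atLeastAtMost')
  also have "\<dots> \<le> T"
    unfolding T_def set_lebesgue_integral_def
    using S_interval S X0(1) S_nonneg unfolding set_integrable_def
    by (intro integral_mono) (auto simp: indicator_def)
  finally have "M * \<epsilon> \<le> T" .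
  moreover have "M * \<epsilon> = T + \<epsilon>" unfolding M_def using eps by (simp add: field_simps)
  ultimately show False using eps by simp
qed

lemma tendsto_le_with_integrable_error:
  fixes F G S :: "real \<Rightarrow> real"
  assumes F: "(F \<longlongrightarrow> a) at_top" and G: "(G \<longlongrightarrow> b) at_top"
    and S: "set_integrable lborel {0..} S" "\<And>x. 0 \<le> S x"
    and le: "\<And>X. 0 \<le> X \<Longrightarrow> F X \<le> G X + S X"
  shows "a \<le> b"
proof (rule ccontr)
  assume "\<not> a \<le> b"
  define \<epsilon> where "\<epsilon> = (a - b) / 3"
  have "\<epsilon> > 0" "3 * \<epsilon> = a - b" using \<open>\<not> a \<le> b\<close> unfolding \<epsilon>_def by simp_all
  have "eventually (\<lambda>X. a - \<epsilon> < F X \<and> G X < b + \<epsilon> \<and> 0 \<le> X) at_top"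
    using order_tendstoD(1)[OF F, of "a - \<epsilon>"] order_tendstoD(2)[OF G, of "b + \<epsilon>"] \<open>\<epsilon> > 0\<close>
    by (intro eventually_conj) (auto simp: eventually_ge_at_top)
  then have "eventually (\<lambda>X. \<epsilon> \<le> S X) at_top"
  proof eventually_elim
    case (elim X)
    then have "F X \<le> G X + S X" using le by blast
    with elim have "a - \<epsilon> < G X + S X" "G X < b + \<epsilon>" by auto
    then show ?case using \<open>3 * \<epsilon> = a - b\<close> by linarith
  qed
  with nonneg_set_integrable_not_eventually_ge[OF S \<open>\<epsilon> > 0\<close>] show False by blast
qed

section \<open>Antiderivatives on compact intervals\<close>

definition antideriv_on :: "real \<Rightarrow> (real \<Rightarrow> real) \<Rightarrow> (real \<Rightarrow> real) \<Rightarrow> bool" where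
  "antideriv_on X u u' \<longleftrightarrow> set_integrable lborel {0..X} u' \<and>
     (\<forall>x\<in>{0..X}. u x = u 0 + (LBINT t:{0..x}. u' t))"

lemma antideriv_onD:
  assumes "antideriv_on X u u'" "0 \<le> x" "x \<le> X"
  shows "u x = u 0 + (LBINT t:{0..x}. u' t)"
  using assms unfolding antideriv_on_def by (meson atLeastAtMost_iff)

lemma antideriv_on_integrable: "antideriv_on X u u' \<Longrightarrow> set_integrable lborel {0..X} u'"
  unfolding antideriv_on_def by blast

lemma antideriv_on_subset:
  assumes u: "antideriv_on X u u'" and "0 \<le> Y" "Y \<le> X"
  shows "antideriv_on Y u u'"
  unfolding antideriv_on_def
proof
  show "set_integrable lborel {0..Y} u'"
    by (rule set_integrable_subset[OF antideriv_on_integrable[OF u]]) (use assms in auto)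
  show "\<forall>x\<in>{0..Y}. u x = u 0 + (LBINT t:{0..x}. u' t)"
  proof
    fix x assume "x \<in> {0..Y}"
    then show "u x = u 0 + (LBINT t:{0..x}. u' t)" using antideriv_onD[OF u, of x] assms by simp
  qed
qed

lemma H1_half_antideriv_on: "H1_half w w' \<Longrightarrow> 0 \<le> X \<Longrightarrow> antideriv_on X w w'"
  unfolding H1_half_def antideriv_on_def by (meson atLeastAtMost_iff)

lemma antideriv_on_continuous:
  assumes u: "antideriv_on X u u'"
  shows "continuous_on {0..X} u"
proof -
  have I: "set_integrable lborel {0..X} u'" by (rule antideriv_on_integrable[OF u])
  have "continuous_on {0..X} (\<lambda>x. u 0 + integral {0..x} u')"
    using set_borel_integral_eq_integral(1)[OF I]
    by (intro continuous_on_add continuous_on_const indefinite_integral_continuous_1)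
  moreover have "u x = u 0 + integral {0..x} u'" if "x \<in> {0..X}" for x
  proof -
    have "set_integrable lborel {0..x} u'"
      by (rule set_integrable_subset[OF I]) (use that in auto)
    then show ?thesis
      using antideriv_onD[OF u, of x] that set_borel_integral_eq_integral(2) by auto
  qed
  ultimately show ?thesis using continuous_on_cong by (metis (no_types, lifting))
qed

lemma antideriv_on_measurable:
  assumes "antideriv_on X u u'"
  shows "set_borel_measurable lborel {0..X} u"
proof -
  have "set_borel_measurable borel {0..X} u"
    by (rule set_measurable_continuous_on[OF _ antideriv_on_continuous[OF assms]]) auto
  then show ?thesis unfolding set_borel_measurable_def by simp
qed

lemma antideriv_on_integral_tail:
  assumes u: "antideriv_on X u u'" and "0 \<le> s" "s \<le> X"
  shows "(LBINT r:{s..X}. u' r) = u X - u s"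
proof -
  have I: "set_integrable lborel {0..X} u'" by (rule antideriv_on_integrable[OF u])
  have I1: "set_integrable lborel {0..<s} u'"
    by (rule set_integrable_subset[OF I]) (use assms in auto)
  have I2: "set_integrable lborel {s..X} u'"
    by (rule set_integrable_subset[OF I]) (use assms in auto)
  have "{0..X} = {0..<s} \<union> {s..X}" "{0..<s} \<inter> {s..X} = {}" using assms by auto
  then have "(LBINT r:{0..X}. u' r) = (LBINT r:{0..<s}. u' r) + (LBINT r:{s..X}. u' r)"
    using set_integral_Un[OF _ I1 I2] by simp
  moreover have "(LBINT r:{0..<s}. u' r) = (LBINT r:{0..s}. u' r)"
    by (rule set_integral_discrete_difference[where X="{s}"]) auto
  moreover have "u X = u 0 + (LBINT r:{0..X}. u' r)" "u s = u 0 + (LBINT r:{0..s}. u' r)"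
    using antideriv_onD[OF u _ order_refl] antideriv_onD[OF u assms(2,3)] assms(2,3) by linarith+
  ultimately show ?thesis by linarith
qed

lemma has_real_derivative_antideriv_on:
  fixes f f' :: "real \<Rightarrow> real"
  assumes "0 \<le> X" and deriv: "\<And>x. (f has_real_derivative f' x) (at x)"
    and cont: "continuous_on UNIV f'"
  shows "antideriv_on X f f'"
  unfolding antideriv_on_def
proof
  show "set_integrable lborel {0..X} f'"
    by (rule borel_integrable_atLeastAtMost'[OF continuous_on_subset[OF cont]]) auto
  show "\<forall>x\<in>{0..X}. f x = f 0 + (LBINT t:{0..x}. f' t)"
  proof
    fix x assume x: "x \<in> {0..X}"
    have "integral\<^sup>L lborel (\<lambda>t. indicator {0..x} t *\<^sub>R f' t) = f x - f 0"
    proof (rule integral_FTC_atLeastAtMost)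
      show "(f has_vector_derivative f' y) (at y within {0..x})" for y
        using deriv[of y] unfolding has_real_derivative_iff_has_vector_derivative
        by (rule has_vector_derivative_at_within)
      show "continuous_on {0..x} f'" by (rule continuous_on_subset[OF cont]) auto
    qed (use x in auto)
    then show "f x = f 0 + (LBINT t:{0..x}. f' t)" unfolding set_lebesgue_integral_def by simp
  qed
qed

text \<open>Fubini on the triangle \<open>0 \<le> s \<le> r \<le> X\<close> for the integrand \<open>u' s * v' r\<close>.\<close>

lemma antideriv_on_triangle_swap:
  fixes u u' v v' :: "real \<Rightarrow> real"
  assumes u: "antideriv_on X u u'" and v: "antideriv_on X v v'"
  shows "(LBINT r:{0..X}. v' r * (u r - u 0)) = (LBINT s:{0..X}. u' s * (v X - v s))"
proof -
  define U' where "U' s = indicator {0..X} s * u' s" for s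
  define V' where "V' s = indicator {0..X} s * v' s" for s
  have iU: "integrable lborel U'"
    using antideriv_on_integrable[OF u] unfolding set_integrable_def U'_def by simp
  have iV: "integrable lborel V'"
    using antideriv_on_integrable[OF v] unfolding set_integrable_def V'_def by simp
  have [measurable]: "U' \<in> borel_measurable lborel" "V' \<in> borel_measurable lborel"
    using iU iV by auto
  define F where "F s r = U' s * V' r * (if s \<le> r then 1 else 0)" for s r :: real
  define G where "G s r = \<bar>U' s\<bar> * \<bar>V' r\<bar>" for s r :: real
  have F_measurable: "case_prod F \<in> borel_measurable (lborel \<Otimes>\<^sub>M lborel)"
    unfolding F_def by measurable
  have G_measurable: "case_prod G \<in> borel_measurable (lborel \<Otimes>\<^sub>M lborel)"
    unfolding G_def by measurable
  have "integrable (lborel \<Otimes>\<^sub>M lborel) (case_prod G)"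
    using iU iV by (intro lborel_pair.Fubini_integrable[OF G_measurable])
      (auto simp: G_def abs_mult integrable_abs)
  then have iF: "integrable (lborel \<Otimes>\<^sub>M lborel) (case_prod F)"
    by (rule Bochner_Integration.integrable_bound[OF _ F_measurable]) (auto simp: F_def G_def abs_mult)
  have inner_s: "(\<integral>s. F s r \<partial>lborel) = V' r * (u r - u 0)" for r
  proof (cases "r \<in> {0..X}")
    case True
    then have "F s r = V' r * (indicator {0..r} s * u' s)" for s
      by (auto simp: F_def U'_def V'_def indicator_def)
    then show ?thesis
      using antideriv_onD[OF u, of r] True by (simp add: set_lebesgue_integral_def)
  qed (simp add: F_def V'_def)
  have inner_r: "(\<integral>r. F s r \<partial>lborel) = U' s * (v X - v s)" for s
  proof (cases "s \<in> {0..X}")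
    case True
    then have "F s r = U' s * (indicator {s..X} r * v' r)" for r
      by (auto simp: F_def U'_def V'_def indicator_def)
    then show ?thesis
      using antideriv_on_integral_tail[OF v, of s] True by (simp add: set_lebesgue_integral_def)
  qed (simp add: F_def U'_def)
  show ?thesis
    using lborel_pair.Fubini_integral[OF iF] unfolding inner_s inner_r set_lebesgue_integral_def U'_def V'_def
    by (simp add: mult.assoc)
qed

lemma antideriv_on_bounded:
  assumes "antideriv_on X u u'"
  obtains B where "\<And>x. x \<in> {0..X} \<Longrightarrow> \<bar>u x\<bar> \<le> B"
  using continuous_on_compact_bound[OF compact_Icc antideriv_on_continuous[OF assms]]
  by (metis real_norm_def)

lemma integration_by_parts:
  fixes u u' v v' :: "real \<Rightarrow> real"
  assumes X: "0 \<le> X" and u: "antideriv_on X u u'" and v: "antideriv_on X v v'"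
  shows "set_integrable lborel {0..X} (\<lambda>x. u' x * v x + u x * v' x)"
    and "u X * v X - u 0 * v 0 = (LBINT x:{0..X}. u' x * v x + u x * v' x)"
proof -
  obtain Bu where Bu: "\<And>x. x \<in> {0..X} \<Longrightarrow> \<bar>u x\<bar> \<le> Bu" using antideriv_on_bounded[OF u] by metis
  obtain Bv where Bv: "\<And>x. x \<in> {0..X} \<Longrightarrow> \<bar>v x\<bar> \<le> Bv" using antideriv_on_bounded[OF v] by metis
  have Iu: "set_integrable lborel {0..X} u'" by (rule antideriv_on_integrable[OF u])
  have Iv: "set_integrable lborel {0..X} v'" by (rule antideriv_on_integrable[OF v])
  have I1: "set_integrable lborel {0..X} (\<lambda>x. u' x * v x)"
    by (rule set_integrable_mult_bounded[OF Iu antideriv_on_measurable[OF v] Bv])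
  have I2: "set_integrable lborel {0..X} (\<lambda>x. u x * v' x)"
    using set_integrable_mult_bounded[OF Iv antideriv_on_measurable[OF u] Bu]
    by (simp add: mult.commute)
  show "set_integrable lborel {0..X} (\<lambda>x. u' x * v x + u x * v' x)"
    using set_integral_add(1)[OF I1 I2] .
  have Iu0: "set_integrable lborel {0..X} (\<lambda>r. u 0 * v' r)" using Iv by auto
  have IvX: "set_integrable lborel {0..X} (\<lambda>r. v X * u' r)" using Iu by auto
  have "(LBINT r:{0..X}. v' r * (u r - u 0)) = (LBINT r:{0..X}. u r * v' r - u 0 * v' r)"
    by (simp add: algebra_simps)
  also have "\<dots> = (LBINT r:{0..X}. u r * v' r) - u 0 * (LBINT r:{0..X}. v' r)"
    using set_integral_diff(2)[OF I2 Iu0] by simp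
  finally have left: "(LBINT r:{0..X}. v' r * (u r - u 0))
      = (LBINT r:{0..X}. u r * v' r) - u 0 * (LBINT r:{0..X}. v' r)" .
  have "(LBINT s:{0..X}. u' s * (v X - v s)) = (LBINT s:{0..X}. v X * u' s - u' s * v s)"
    by (simp add: algebra_simps)
  also have "\<dots> = v X * (LBINT s:{0..X}. u' s) - (LBINT s:{0..X}. u' s * v s)"
    using set_integral_diff(2)[OF IvX I1] by simp
  finally have right: "(LBINT s:{0..X}. u' s * (v X - v s))
      = v X * (LBINT s:{0..X}. u' s) - (LBINT s:{0..X}. u' s * v s)" .
  have "u X = u 0 + (LBINT t:{0..X}. u' t)" "v X = v 0 + (LBINT t:{0..X}. v' t)"
    using antideriv_onD[OF u X order_refl] antideriv_onD[OF v X order_refl] .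
  with antideriv_on_triangle_swap[OF u v] left right set_integral_add(2)[OF I1 I2]
  show "u X * v X - u 0 * v 0 = (LBINT x:{0..X}. u' x * v x + u x * v' x)"
    by (simp add: algebra_simps)
qed

lemma antideriv_on_mult:
  fixes u u' v v' :: "real \<Rightarrow> real"
  assumes "0 \<le> X" and u: "antideriv_on X u u'" and v: "antideriv_on X v v'"
  shows "antideriv_on X (\<lambda>x. u x * v x) (\<lambda>x. u' x * v x + u x * v' x)"
  unfolding antideriv_on_def
proof
  show "set_integrable lborel {0..X} (\<lambda>x. u' x * v x + u x * v' x)"
    by (rule integration_by_parts(1)[OF assms])
  show "\<forall>x\<in>{0..X}. u x * v x = u 0 * v 0 + (LBINT t:{0..x}. u' t * v t + u t * v' t)"
  proof
    fix x assume x: "x \<in> {0..X}"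
    have "antideriv_on x u u'" "antideriv_on x v v'"
      using antideriv_on_subset[OF u] antideriv_on_subset[OF v] x by auto
    from integration_by_parts(2)[OF _ this] x
    show "u x * v x = u 0 * v 0 + (LBINT t:{0..x}. u' t * v t + u t * v' t)" by simp
  qed
qed

section \<open>The ground state \<open>phi\<close>\<close>

definition psi :: "real \<Rightarrow> real \<Rightarrow> real" where
  "psi p x = cosh (p * x) powr (1 / p)"

lemma psi_pos: "psi p x > 0"
  unfolding psi_def using cosh_real_pos[of "p * x"] by simp

lemma psi_0 [simp]: "psi p 0 = 1"
  by (simp add: psi_def)

lemma phi_eq_inverse_psi: "phi p x = 1 / psi p x"
  unfolding phi_def psi_def using cosh_real_pos[of "p * x"] by (simp add: powr_divide)

lemma phi_pos: "phi p x > 0"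
  using psi_pos[of p x] phi_eq_inverse_psi by simp

lemma continuous_on_phi: "p > 0 \<Longrightarrow> continuous_on UNIV (phi p)"
  unfolding phi_def by (auto intro!: continuous_intros simp: cosh_real_pos less_imp_neq[symmetric])

lemma continuous_on_psi: "continuous_on UNIV (psi p)"
  unfolding psi_def by (auto intro!: continuous_intros simp: cosh_real_pos less_imp_neq[symmetric])

lemma has_real_derivative_psi:
  assumes "p > 0"
  shows "(psi p has_real_derivative psi p x * tanh (p * x)) (at x)"
proof -
  have c: "cosh (p * x) > 0" by (rule cosh_real_pos)
  have "((\<lambda>x. cosh (p * x) powr (1 / p)) has_real_derivative
      (1 / p) * cosh (p * x) powr (1 / p - of_nat 1) * (sinh (p * x) * p)) (at x)"
    by (rule DERIV_fun_powr) (auto intro!: derivative_eq_intros simp: cosh_real_pos)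
  moreover have "cosh (p * x) powr (1 / p - of_nat 1) = cosh (p * x) powr (1 / p) / cosh (p * x)"
    using c by (simp add: powr_diff)
  then have "(1 / p) * cosh (p * x) powr (1 / p - of_nat 1) * (sinh (p * x) * p) = psi p x * tanh (p * x)"
    using assms c by (simp add: psi_def tanh_def field_simps)
  ultimately show ?thesis unfolding psi_def by simp
qed

lemma tanh_square_le_1: "tanh (x::real) ^ 2 \<le> 1"
  using tanh_real_bounds[of x] by (simp add: abs_square_le_1 abs_less_iff less_imp_le)

lemma phi_powr_2p:
  assumes "p > 0"
  shows "phi p x powr (2 * p) = 1 - tanh (p * x) ^ 2"
proof -
  have c: "cosh (p * x) > 0" by (rule cosh_real_pos)
  have "phi p x powr (2 * p) = (1 / cosh (p * x)) powr ((1 / p) * (2 * p))"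
    unfolding phi_def using c by (simp add: powr_powr)
  also have "\<dots> = (1 / cosh (p * x))^2" using assms c by (simp add: powr_numeral)
  also have "\<dots> = 1 - tanh (p * x) ^ 2"
  proof -
    have "1 - tanh (p * x) ^ 2 = (cosh (p * x) ^ 2 - sinh (p * x) ^ 2) / cosh (p * x) ^ 2"
      using c by (simp add: tanh_def field_simps)
    then show ?thesis by (simp add: hyperbolic_pythagoras power_one_over)
  qed
  finally show ?thesis .
qed

lemma phi_powr_2p_bounds:
  assumes "p > 0"
  shows "0 \<le> phi p x powr (2 * p)" "phi p x powr (2 * p) \<le> 1"
  using tanh_square_le_1[of "p * x"] phi_powr_2p[OF assms, of x] by simp_all

lemma psi_le_exp:
  assumes "p > 0" "y \<ge> 0"
  shows "psi p y \<le> exp y"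
proof -
  have "cosh (p * y) \<le> exp (p * y)"
    unfolding cosh_def using assms exp_le_cancel_iff[of "- (p * y)" "p * y"] by simp
  then have "psi p y \<le> exp (p * y) powr (1 / p)"
    unfolding psi_def using assms by (intro powr_mono2) (auto simp: less_imp_le cosh_real_pos)
  also have "\<dots> = exp y" using assms by (simp add: powr_def)
  finally show ?thesis .
qed

lemma phi_le_exp:
  assumes "p > 0" "x \<ge> 0"
  shows "phi p x \<le> 2 powr (1 / p) * exp (- x)"
proof -
  have "exp (p * x) / 2 \<le> cosh (p * x)"
    unfolding cosh_def by simp
  then have "1 / cosh (p * x) \<le> 2 * exp (- (p * x))"
    using cosh_real_pos[of "p * x"] by (simp add: exp_minus field_simps)
  then have "phi p x \<le> (2 * exp (- (p * x))) powr (1 / p)"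
    unfolding phi_def using assms by (intro powr_mono2) (auto simp: less_imp_le cosh_real_pos)
  also have "\<dots> = 2 powr (1 / p) * exp (- (p * x)) powr (1 / p)" by (simp add: powr_mult)
  also have "exp (- (p * x)) powr (1 / p) = exp (- x)" using assms by (simp add: powr_def)
  finally show ?thesis .
qed

lemma phi_mult_psi_le:
  assumes "p > 0" "0 \<le> y" "y \<le> x"
  shows "phi p x * psi p y \<le> 2 powr (1 / p) * exp (y - x)"
proof -
  have "phi p x * psi p y \<le> (2 powr (1 / p) * exp (- x)) * exp y"
    using phi_le_exp[OF assms(1), of x] psi_le_exp[OF assms(1,2)] assms phi_pos[of p x] psi_pos[of p y]
    by (intro mult_mono) auto
  then show ?thesis by (simp add: exp_diff exp_minus field_simps)
qed

lemma phi_square_integrable: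
  assumes "p > 0"
  shows "set_integrable lborel {0..} (\<lambda>x. phi p x ^ 2)"
proof (rule set_integrable_bound[of _ _ "\<lambda>x. (2 powr (1 / p))^2 * exp (- x)"])
  show "set_integrable lborel {0..} (\<lambda>x. (2 powr (1 / p))^2 * exp (- x))"
    using set_integrable_exp_minus by simp
  show "set_borel_measurable lborel {0..} (\<lambda>x. phi p x ^ 2)"
    using continuous_on_phi[OF assms] by (intro set_borel_measurable_continuous) (auto intro!: continuous_intros)
  show "AE x in lborel. x \<in> {0..} \<longrightarrow> norm (phi p x ^ 2) \<le> norm ((2 powr (1 / p))^2 * exp (- x))"
  proof (intro AE_I2 impI)
    fix x :: real assume "x \<in> {0..}"
    then have x: "0 \<le> x" by simp
    have "phi p x ^ 2 \<le> (2 powr (1 / p) * exp (- x))^2"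
      using phi_le_exp[OF assms x] phi_pos[of p x] by (intro power_mono) auto
    also have "\<dots> \<le> (2 powr (1 / p))^2 * exp (- x)"
      using x by (simp add: power2_eq_square mult_left_le_one_le)
    finally show "norm (phi p x ^ 2) \<le> norm ((2 powr (1 / p))^2 * exp (- x))" by simp
  qed
qed

section \<open>The estimate on a single half-line\<close>

definition Lminus_density :: "real \<Rightarrow> (real \<Rightarrow> real) \<Rightarrow> (real \<Rightarrow> real) \<Rightarrow> real \<Rightarrow> real" where
  "Lminus_density p w w' x = (w' x)^2 + (w x)^2 - (p + 1) * (phi p x) powr (2 * p) * (w x)^2"

lemma antideriv_on_tanh:
  "0 \<le> X \<Longrightarrow> antideriv_on X (\<lambda>x. tanh (p * x)) (\<lambda>x. p * (1 - tanh (p * x) ^ 2))"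
  by (rule has_real_derivative_antideriv_on)
     (auto intro!: derivative_eq_intros continuous_intros
       simp: cosh_real_pos less_imp_neq[symmetric] mult.commute)

lemma antideriv_on_psi: "0 \<le> X \<Longrightarrow> p > 0 \<Longrightarrow> antideriv_on X (psi p) (\<lambda>x. psi p x * tanh (p * x))"
  by (rule has_real_derivative_antideriv_on[OF _ has_real_derivative_psi])
     (auto intro!: continuous_intros continuous_on_psi simp: cosh_real_pos less_imp_neq[symmetric])

lemma Lminus_density_set_integrable:
  assumes p: "p > 0"
    and w'_sq: "set_integrable lborel A (\<lambda>x. w' x ^ 2)" and w_sq: "set_integrable lborel A (\<lambda>x. w x ^ 2)"
    and A: "A \<in> sets lborel"
  shows "set_integrable lborel A (Lminus_density p w w')"
proof -
  have "set_integrable lborel A (\<lambda>x. w x ^ 2 * phi p x powr (2 * p))"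
  proof (rule set_integrable_mult_bounded[OF w_sq])
    show "set_borel_measurable lborel A (\<lambda>x. phi p x powr (2 * p))"
      unfolding phi_powr_2p[OF p]
      by (rule set_borel_measurable_continuous[OF _ A])
         (auto intro!: continuous_intros simp: cosh_real_pos less_imp_neq[symmetric])
    show "\<bar>phi p x powr (2 * p)\<bar> \<le> 1" for x using phi_powr_2p_bounds[OF p, of x] by simp
  qed
  then have "set_integrable lborel A (\<lambda>x. (p + 1) * phi p x powr (2 * p) * w x ^ 2)"
    by (simp add: ac_simps)
  then show ?thesis
    unfolding Lminus_density_def[abs_def]
    using set_integral_diff(1)[OF set_integral_add(1)[OF w'_sq w_sq]] by simp
qed

lemma tanh_energy_identity:
  fixes w w' :: "real \<Rightarrow> real"
  assumes p: "p > 0" and X: "0 \<le> X" and w: "antideriv_on X w w'"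
    and w'_sq: "set_integrable lborel {0..X} (\<lambda>x. w' x ^ 2)"
    and w_sq: "set_integrable lborel {0..X} (\<lambda>x. w x ^ 2)"
  shows "set_integrable lborel {0..X} (\<lambda>x. (w' x + tanh (p * x) * w x)^2)"
    and "(LBINT x:{0..X}. (w' x + tanh (p * x) * w x)^2)
           = (LBINT x:{0..X}. Lminus_density p w w' x) + tanh (p * X) * w X ^ 2"
proof -
  define r where "r x = w' x * (tanh (p * x) * w x)
      + w x * (p * (1 - tanh (p * x) ^ 2) * w x + tanh (p * x) * w' x)" for x
  have tw: "antideriv_on X (\<lambda>x. tanh (p * x) * w x)
      (\<lambda>x. p * (1 - tanh (p * x) ^ 2) * w x + tanh (p * x) * w' x)"
    using antideriv_on_mult[OF X antideriv_on_tanh[OF X] w] .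
  have r: "set_integrable lborel {0..X} r"
    unfolding r_def by (rule integration_by_parts(1)[OF X w tw])
  have r_integral: "(LBINT x:{0..X}. r x) = tanh (p * X) * w X ^ 2"
    using integration_by_parts(2)[OF X w tw] unfolding r_def[symmetric]
    by (simp add: power2_eq_square algebra_simps)
  have q: "set_integrable lborel {0..X} (Lminus_density p w w')"
    by (rule Lminus_density_set_integrable[OF p w'_sq w_sq]) simp
  have split: "(w' x + tanh (p * x) * w x)^2 = Lminus_density p w w' x + r x" for x
    unfolding Lminus_density_def phi_powr_2p[OF p] r_def
    by (simp add: power2_eq_square algebra_simps)
  show "set_integrable lborel {0..X} (\<lambda>x. (w' x + tanh (p * x) * w x)^2)"
    unfolding split using set_integral_add(1)[OF q r] .
  show "(LBINT x:{0..X}. (w' x + tanh (p * x) * w x)^2)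
      = (LBINT x:{0..X}. Lminus_density p w w' x) + tanh (p * X) * w X ^ 2"
    unfolding split set_integral_add(2)[OF q r] r_integral ..
qed

lemma deviation_eq_phi_integral:
  assumes p: "p > 0" and x: "0 \<le> x" and w: "antideriv_on x w w'"
  shows "w x - w 0 * phi p x = phi p x * (LBINT y:{0..x}. psi p y * (w' y + tanh (p * y) * w y))"
proof -
  have "w x * psi p x - w 0 * psi p 0 = (LBINT y:{0..x}. w' y * psi p y + w y * (psi p y * tanh (p * y)))"
    by (rule integration_by_parts(2)[OF x w antideriv_on_psi[OF x p]])
  also have "\<dots> = (LBINT y:{0..x}. psi p y * (w' y + tanh (p * y) * w y))"
    by (simp add: algebra_simps)
  finally show ?thesis
    using psi_pos[of p x] unfolding phi_eq_inverse_psi by (simp add: field_simps)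
qed

lemma set_integral_exp_minus_le_1:
  fixes x :: real
  assumes "0 \<le> x"
  shows "(LBINT y:{0..x}. exp (y - x)) \<le> 1"
proof -
  have "antideriv_on x (\<lambda>y. exp (y - x)) (\<lambda>y. exp (y - x))"
    by (rule has_real_derivative_antideriv_on[OF assms])
       (auto intro!: derivative_eq_intros continuous_intros)
  from antideriv_onD[OF this assms order_refl] have "exp (- x) + (LBINT y:{0..x}. exp (y - x)) = 1"
    by simp
  then show ?thesis using exp_gt_zero[of "- x"] by linarith
qed

lemma phi_square_mult_integral_psi_square_le:
  assumes p: "p > 0" and x: "0 \<le> x"
  shows "phi p x ^ 2 * (LBINT y:{0..x}. psi p y ^ 2 * exp (x - y)) \<le> (2 powr (1 / p))^2"
proof -
  define K where "K = 2 powr (1 / p)"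
  have "phi p x ^ 2 * (LBINT y:{0..x}. psi p y ^ 2 * exp (x - y))
      = (LBINT y:{0..x}. phi p x ^ 2 * (psi p y ^ 2 * exp (x - y)))"
    by simp
  also have "\<dots> \<le> (LBINT y:{0..x}. K^2 * exp (y - x))"
  proof (rule set_integral_mono)
    show "set_integrable lborel {0..x} (\<lambda>y. phi p x ^ 2 * (psi p y ^ 2 * exp (x - y)))"
      using continuous_on_psi[of p]
      by (intro borel_integrable_atLeastAtMost') (auto intro!: continuous_intros intro: continuous_on_subset)
    show "set_integrable lborel {0..x} (\<lambda>y. K^2 * exp (y - x))"
      by (intro borel_integrable_atLeastAtMost') (auto intro!: continuous_intros)
    fix y assume y: "y \<in> {0..x}"
    have "(phi p x * psi p y) ^ 2 \<le> (K * exp (y - x))^2"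
      using phi_mult_psi_le[OF p, of y x] y phi_pos[of p x] psi_pos[of p y] unfolding K_def
      by (intro power_mono) auto
    then have "(phi p x * psi p y) ^ 2 * exp (x - y) \<le> (K * exp (y - x))^2 * exp (x - y)"
      by (intro mult_right_mono) auto
    also have "(K * exp (y - x))^2 * exp (x - y) = K^2 * exp (y - x)"
      by (simp add: power2_eq_square exp_add[symmetric] algebra_simps)
    finally show "phi p x ^ 2 * (psi p y ^ 2 * exp (x - y)) \<le> K^2 * exp (y - x)"
      by (simp add: power_mult_distrib algebra_simps)
  qed
  also have "\<dots> = K^2 * (LBINT y:{0..x}. exp (y - x))" by simp
  also have "\<dots> \<le> K^2" using set_integral_exp_minus_le_1[OF x] by (simp add: mult_left_le)
  finally show ?thesis unfolding K_def .
qed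

lemma deviation_pointwise_bound:
  fixes w w' :: "real \<Rightarrow> real"
  assumes p: "p > 0" and x: "0 \<le> x" and w: "antideriv_on x w w'"
    and g_sq: "set_integrable lborel {0..x} (\<lambda>y. (w' y + tanh (p * y) * w y)^2)"
  shows "(w x - w 0 * phi p x)^2
    \<le> (2 powr (1 / p))^2 * (LBINT y:{0..x}. exp (y - x) * (w' y + tanh (p * y) * w y)^2)"
proof -
  define g where "g y = w' y + tanh (p * y) * w y" for y
  define a where "a y = psi p y * exp ((x - y) / 2)" for y
  define b where "b y = exp ((y - x) / 2) * g y" for y
  have exp_half: "exp ((x - y) / 2) * exp ((y - x) / 2) = 1" "exp ((x - y) / 2) ^ 2 = exp (x - y)"
    "exp ((y - x) / 2) ^ 2 = exp (y - x)" for y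
    by (simp_all add: power2_eq_square exp_add[symmetric] diff_divide_distrib)
  have ab: "a y * b y = psi p y * g y" for y
    unfolding a_def b_def using exp_half(1)[of y] by (simp add: algebra_simps)
  have a_sq: "a y ^ 2 = psi p y ^ 2 * exp (x - y)" for y
    unfolding a_def using exp_half(2)[of y] by (simp add: power_mult_distrib)
  have b_sq: "b y ^ 2 = exp (y - x) * g y ^ 2" for y
    unfolding b_def using exp_half(3)[of y] by (simp add: power_mult_distrib)
  have ia: "set_integrable lborel {0..x} (\<lambda>y. a y ^ 2)"
    unfolding a_sq using continuous_on_psi[of p]
    by (intro borel_integrable_atLeastAtMost') (auto intro!: continuous_intros intro: continuous_on_subset)
  have "set_integrable lborel {0..x} (\<lambda>y. (w' y + tanh (p * y) * w y)^2 * exp (y - x))"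
  proof (rule set_integrable_mult_bounded[OF g_sq, where B=1])
    show "set_borel_measurable lborel {0..x} (\<lambda>y. exp (y - x))"
      by (rule set_borel_measurable_continuous) (auto intro!: continuous_intros)
  qed simp
  then have ib: "set_integrable lborel {0..x} (\<lambda>y. b y ^ 2)"
    unfolding b_sq g_def by (simp add: mult.commute)
  have ig: "set_integrable lborel {0..x} g"
  proof -
    have "set_integrable lborel {0..x} (\<lambda>y. tanh (p * y) * w y)"
      using antideriv_on_continuous[OF w]
      by (intro borel_integrable_atLeastAtMost')
         (auto intro!: continuous_intros simp: cosh_real_pos less_imp_neq[symmetric])
    then show ?thesis
      unfolding g_def[abs_def] using set_integral_add(1)[OF antideriv_on_integrable[OF w]] by blast
  qed
  have iab: "set_integrable lborel {0..x} (\<lambda>y. a y * b y)"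
    unfolding ab
  proof (subst mult.commute, rule set_integrable_mult_bounded[OF ig])
    show "set_borel_measurable lborel {0..x} (psi p)"
      by (rule set_borel_measurable_continuous[OF continuous_on_psi]) simp
    show "\<bar>psi p y\<bar> \<le> exp x" if "y \<in> {0..x}" for y
      using psi_le_exp[OF p, of y] psi_pos[of p y] that by (auto intro: order_trans)
  qed
  have "(w x - w 0 * phi p x)^2 = phi p x ^ 2 * (LBINT y:{0..x}. a y * b y)^2"
    unfolding deviation_eq_phi_integral[OF p x w] ab g_def by (simp add: power_mult_distrib)
  also have "\<dots> \<le> phi p x ^ 2 * ((LBINT y:{0..x}. a y ^ 2) * (LBINT y:{0..x}. b y ^ 2))"
    using set_integral_Cauchy_Schwarz[OF ia ib iab] by (intro mult_left_mono) auto
  also have "\<dots> \<le> (2 powr (1 / p))^2 * (LBINT y:{0..x}. b y ^ 2)"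
    using phi_square_mult_integral_psi_square_le[OF p x] set_integral_nonneg[OF ib]
    unfolding a_sq by (subst mult.assoc[symmetric]) (intro mult_right_mono, auto)
  finally show ?thesis unfolding b_sq g_def .
qed

lemma set_integral_exp_convolution_le:
  fixes G :: "real \<Rightarrow> real"
  assumes X: "0 \<le> X" and G: "set_integrable lborel {0..X} G" and G_nonneg: "\<And>y. 0 \<le> G y"
  shows "set_integrable lborel {0..X} (\<lambda>x. exp (- x) * (LBINT y:{0..x}. exp y * G y))"
    and "(LBINT x:{0..X}. exp (- x) * (LBINT y:{0..x}. exp y * G y)) \<le> (LBINT x:{0..X}. G x)"
proof -
  define F where "F x = (LBINT y:{0..x}. exp y * G y)" for x
  have "set_integrable lborel {0..X} (\<lambda>y. G y * exp y)"
    by (rule set_integrable_mult_bounded[OF G, where B="exp X"])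
       (auto intro!: set_borel_measurable_continuous continuous_intros)
  then have eG: "set_integrable lborel {0..X} (\<lambda>y. exp y * G y)" by (simp add: mult.commute)
  have F0: "F 0 = 0"
  proof -
    have "F 0 = (LBINT y:{}. exp y * G y)" unfolding F_def
      by (rule set_integral_discrete_difference[where X="{0}"]) auto
    then show ?thesis by (simp add: set_lebesgue_integral_def)
  qed
  have F: "antideriv_on X F (\<lambda>y. exp y * G y)" unfolding antideriv_on_def using eG F0 F_def by simp
  have E: "antideriv_on X (\<lambda>x. - exp (- x)) (\<lambda>x. exp (- x))"
    by (rule has_real_derivative_antideriv_on[OF X]) (auto intro!: derivative_eq_intros continuous_intros)
  have parts: "exp y * G y * (- exp (- y)) + F y * exp (- y) = F y * exp (- y) - G y" for y
    by (simp add: exp_minus field_simps)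
  have "set_integrable lborel {0..X} (\<lambda>y. (F y * exp (- y) - G y) + G y)"
    using set_integral_add(1)[OF integration_by_parts(1)[OF X F E, unfolded parts] G] .
  then have FE: "set_integrable lborel {0..X} (\<lambda>y. F y * exp (- y))" by simp
  then show "set_integrable lborel {0..X} (\<lambda>x. exp (- x) * (LBINT y:{0..x}. exp y * G y))"
    unfolding F_def by (simp add: mult.commute)
  have "- F X * exp (- X) = (LBINT y:{0..X}. F y * exp (- y) - G y)"
    using integration_by_parts(2)[OF X F E] F0 unfolding parts by simp
  also have "\<dots> = (LBINT y:{0..X}. F y * exp (- y)) - (LBINT y:{0..X}. G y)"
    by (rule set_integral_diff(2)[OF FE G])
  finally have "(LBINT y:{0..X}. F y * exp (- y)) = (LBINT y:{0..X}. G y) - F X * exp (- X)"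
    by simp
  moreover have "0 \<le> F X" unfolding F_def by (rule set_integral_nonneg[OF eG]) (simp add: G_nonneg)
  ultimately show "(LBINT x:{0..X}. exp (- x) * (LBINT y:{0..x}. exp y * G y)) \<le> (LBINT x:{0..X}. G x)"
    unfolding F_def by (simp add: mult.commute)
qed

lemma deviation_truncated_bound:
  fixes w w' :: "real \<Rightarrow> real"
  assumes p: "p > 0" and X: "0 \<le> X" and w: "antideriv_on X w w'"
    and w'_sq: "set_integrable lborel {0..X} (\<lambda>x. w' x ^ 2)"
    and w_sq: "set_integrable lborel {0..X} (\<lambda>x. w x ^ 2)"
  shows "(LBINT x:{0..X}. (w x - w 0 * phi p x)^2)
    \<le> (2 powr (1 / p))^2 * ((LBINT x:{0..X}. Lminus_density p w w' x) + w X ^ 2)"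
proof -
  define K where "K = (2 powr (1 / p))^2"
  define G where "G y = (w' y + tanh (p * y) * w y)^2" for y
  have G: "set_integrable lborel {0..X} G"
    unfolding G_def[abs_def] by (rule tanh_energy_identity(1)[OF p X w w'_sq w_sq])
  have G_nonneg: "\<And>y. 0 \<le> G y" by (simp add: G_def)
  have "(LBINT x:{0..X}. (w x - w 0 * phi p x)^2) \<le> (LBINT x:{0..X}. K * (exp (- x) * (LBINT y:{0..x}. exp y * G y)))"
  proof (rule set_integral_mono)
    show "set_integrable lborel {0..X} (\<lambda>x. (w x - w 0 * phi p x)^2)"
      using antideriv_on_continuous[OF w] continuous_on_phi[OF p]
      by (intro borel_integrable_atLeastAtMost') (auto intro!: continuous_intros intro: continuous_on_subset)
    show "set_integrable lborel {0..X} (\<lambda>x. K * (exp (- x) * (LBINT y:{0..x}. exp y * G y)))"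
      using set_integral_exp_convolution_le(1)[OF X G G_nonneg] by simp
    fix x assume x: "x \<in> {0..X}"
    have "set_integrable lborel {0..x} G"
      by (rule set_integrable_subset[OF G]) (use x in auto)
    then have "(w x - w 0 * phi p x)^2 \<le> K * (LBINT y:{0..x}. exp (y - x) * G y)"
      using deviation_pointwise_bound[OF p _ antideriv_on_subset[OF w]] x unfolding K_def G_def
      by auto
    also have "(LBINT y:{0..x}. exp (y - x) * G y) = exp (- x) * (LBINT y:{0..x}. exp y * G y)"
      by (simp add: exp_diff exp_minus field_simps)
    finally show "(w x - w 0 * phi p x)^2 \<le> K * (exp (- x) * (LBINT y:{0..x}. exp y * G y))" .
  qed
  also have "\<dots> \<le> K * (LBINT x:{0..X}. G x)"
    using set_integral_exp_convolution_le(2)[OF X G G_nonneg] unfolding K_def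
    by (simp add: G_def mult_left_mono)
  also have "\<dots> = K * ((LBINT x:{0..X}. Lminus_density p w w' x) + tanh (p * X) * w X ^ 2)"
    unfolding G_def tanh_energy_identity(2)[OF p X w w'_sq w_sq] ..
  also have "\<dots> \<le> K * ((LBINT x:{0..X}. Lminus_density p w w' x) + w X ^ 2)"
    using mult_right_mono[OF less_imp_le[OF tanh_real_lt_1[of "p * X"]], of "w X ^ 2"]
    unfolding K_def by (intro mult_left_mono add_left_mono) auto
  finally show ?thesis unfolding K_def .
qed

lemma H1_half_square_integrable:
  assumes "H1_half w w'"
  shows "set_integrable lborel {0..} (\<lambda>x. w x ^ 2)" "set_integrable lborel {0..} (\<lambda>x. w' x ^ 2)"
  using assms unfolding H1_half_def L2_half_def by blast+

lemma H1_half_phi_integrable: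
  assumes p: "p > 0" and w: "H1_half w w'"
  shows "set_integrable lborel {0..} (\<lambda>x. w x * phi p x)"
    and "set_integrable lborel {0..} (\<lambda>x. (w x - c * phi p x)^2)"
proof -
  have w_sq: "set_integrable lborel {0..} (\<lambda>x. w x ^ 2)"
    using H1_half_square_integrable[OF w] by blast
  have phi_sq: "set_integrable lborel {0..} (\<lambda>x. phi p x ^ 2)" by (rule phi_square_integrable[OF p])
  show w_phi: "set_integrable lborel {0..} (\<lambda>x. w x * phi p x)"
    using w unfolding H1_half_def L2_half_def
    by (intro set_integrable_mult_square_integrable[OF w_sq phi_sq]
        set_borel_measurable_continuous[OF continuous_on_phi[OF p]]) auto
  have "(\<lambda>x. (w x - c * phi p x)^2) = (\<lambda>x. w x ^ 2 - (2 * c * (w x * phi p x) - c^2 * phi p x ^ 2))"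
    by (simp add: fun_eq_iff power2_eq_square algebra_simps)
  then show "set_integrable lborel {0..} (\<lambda>x. (w x - c * phi p x)^2)"
    using w_sq w_phi phi_sq by (auto intro!: set_integral_diff(1))
qed

text \<open>The boundary term \<open>w(X)^2\<close> of the truncated bound is integrable in \<open>X\<close>, hence cannot stay
  bounded away from zero.\<close>

lemma deviation_bound:
  assumes p: "p > 0" and w: "H1_half w w'"
  shows "(LBINT x:{0..}. (w x - w 0 * phi p x)^2) \<le> (2 powr (1 / p))^2 * (LBINT x:{0..}. Lminus_density p w w' x)"
proof (rule tendsto_le_with_integrable_error)
  define K where "K = (2 powr (1 / p))^2"
  note w_sq = H1_half_square_integrable[OF w]
  show "((\<lambda>X. LBINT x:{0..X}. (w x - w 0 * phi p x)^2) \<longlongrightarrow> (LBINT x:{0..}. (w x - w 0 * phi p x)^2)) at_top"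
    by (intro tendsto_set_lebesgue_integral_at_top H1_half_phi_integrable[OF p w]) auto
  show "((\<lambda>X. K * (LBINT x:{0..X}. Lminus_density p w w' x))
      \<longlongrightarrow> K * (LBINT x:{0..}. Lminus_density p w w' x)) at_top"
    by (intro tendsto_mult_left tendsto_set_lebesgue_integral_at_top
        Lminus_density_set_integrable[OF p w_sq(2,1)]) auto
  show "set_integrable lborel {0..} (\<lambda>X. K * w X ^ 2)" using w_sq(1) by simp
  show "0 \<le> K * w X ^ 2" for X by (simp add: K_def)
  fix X :: real assume X: "0 \<le> X"
  have "set_integrable lborel {0..X} (\<lambda>x. w' x ^ 2)"
    by (rule set_integrable_subset[OF w_sq(2)]) auto
  moreover have "set_integrable lborel {0..X} (\<lambda>x. w x ^ 2)"
    by (rule set_integrable_subset[OF w_sq(1)]) auto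
  ultimately have "(LBINT x:{0..X}. (w x - w 0 * phi p x)^2)
      \<le> K * ((LBINT x:{0..X}. Lminus_density p w w' x) + w X ^ 2)"
    unfolding K_def by (rule deviation_truncated_bound[OF p X H1_half_antideriv_on[OF w X]])
  then
  show "(LBINT x:{0..X}. (w x - w 0 * phi p x)^2)
      \<le> K * (LBINT x:{0..X}. Lminus_density p w w' x) + K * w X ^ 2"
    by (simp add: distrib_left)
qed

lemma H1_half_norm_le_Lminus_plus_mass:
  assumes p: "p > 0" and w: "H1_half w w'"
  shows "(LBINT x:{0..}. w' x ^ 2 + w x ^ 2)
    \<le> (LBINT x:{0..}. Lminus_density p w w' x) + (p + 1) * (LBINT x:{0..}. w x ^ 2)"
proof -
  note w_sq = H1_half_square_integrable[OF w]
  have q: "set_integrable lborel {0..} (Lminus_density p w w')"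
    by (rule Lminus_density_set_integrable[OF p w_sq(2,1)]) simp
  have "(LBINT x:{0..}. w' x ^ 2 + w x ^ 2) \<le> (LBINT x:{0..}. Lminus_density p w w' x + (p + 1) * w x ^ 2)"
  proof (rule set_integral_mono)
    show "set_integrable lborel {0..} (\<lambda>x. w' x ^ 2 + w x ^ 2)"
      using set_integral_add(1)[OF w_sq(2,1)] .
    show "set_integrable lborel {0..} (\<lambda>x. Lminus_density p w w' x + (p + 1) * w x ^ 2)"
      using set_integral_add(1)[OF q] w_sq(1) by simp
    show "w' x ^ 2 + w x ^ 2 \<le> Lminus_density p w w' x + (p + 1) * w x ^ 2" for x
      using mult_right_mono[OF phi_powr_2p_bounds(2)[OF p, of x], of "(p + 1) * w x ^ 2"] p
      unfolding Lminus_density_def by (simp add: algebra_simps)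
  qed
  also have "\<dots> = (LBINT x:{0..}. Lminus_density p w w' x) + (p + 1) * (LBINT x:{0..}. w x ^ 2)"
    using set_integral_add(2)[OF q, of "\<lambda>x. (p + 1) * w x ^ 2"] w_sq(1) by simp
  finally show ?thesis .
qed

lemma H1_half_mass_le_deviation:
  assumes p: "p > 0" and w: "H1_half w w'"
  shows "(LBINT x:{0..}. w x ^ 2)
    \<le> (LBINT x:{0..}. (w x - c * phi p x)^2) + 2 * c * (LBINT x:{0..}. w x * phi p x)"
proof -
  note w_phi = H1_half_phi_integrable[OF p w]
  have "(LBINT x:{0..}. w x ^ 2) \<le> (LBINT x:{0..}. (w x - c * phi p x)^2 + 2 * c * (w x * phi p x))"
  proof (rule set_integral_mono[OF H1_half_square_integrable(1)[OF w]])
    show "set_integrable lborel {0..} (\<lambda>x. (w x - c * phi p x)^2 + 2 * c * (w x * phi p x))"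
      using set_integral_add(1)[OF w_phi(2)] w_phi(1) by simp
    show "w x ^ 2 \<le> (w x - c * phi p x)^2 + 2 * c * (w x * phi p x)" for x
      using zero_le_power2[of "c * phi p x"] by (simp add: power2_eq_square algebra_simps)
  qed
  also have "\<dots> = (LBINT x:{0..}. (w x - c * phi p x)^2) + 2 * c * (LBINT x:{0..}. w x * phi p x)"
    using set_integral_add(2)[OF w_phi(2), of "\<lambda>x. 2 * c * (w x * phi p x)"] w_phi(1) by simp
  finally show ?thesis .
qed

lemma edge_estimate:
  assumes p: "p > 0" and w: "H1_half w w'"
  shows "(LBINT x:{0..}. w' x ^ 2 + w x ^ 2)
    \<le> (1 + (p + 1) * (2 powr (1 / p))^2) * (LBINT x:{0..}. Lminus_density p w w' x)
      + 2 * (p + 1) * w 0 * (LBINT x:{0..}. w x * phi p x)"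
proof -
  define Q where "Q = (LBINT x:{0..}. Lminus_density p w w' x)"
  define P where "P = (LBINT x:{0..}. w x * phi p x)"
  have "(LBINT x:{0..}. w x ^ 2) \<le> (2 powr (1 / p))^2 * Q + 2 * w 0 * P"
    using H1_half_mass_le_deviation[OF p w, of "w 0"] deviation_bound[OF p w]
    unfolding Q_def P_def by linarith
  then have "(p + 1) * (LBINT x:{0..}. w x ^ 2) \<le> (p + 1) * ((2 powr (1 / p))^2 * Q + 2 * w 0 * P)"
    using p by (intro mult_left_mono) auto
  with H1_half_norm_le_Lminus_plus_mass[OF p w] show ?thesis
    unfolding Q_def P_def by (simp add: algebra_simps)
qed

theorem lemma3p1:
  fixes N :: nat and p :: real
  assumes "N \<ge> 3" and "p > 0"
  shows "\<exists>C>0. \<forall>W W'. H1_Gamma N W W' \<and> in_L2c N p W \<longrightarrow>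
           Lminus_form N p W W' \<ge> C * H1_norm_sq N W W'"
proof -
  define K where "K = 1 + (p + 1) * (2 powr (1 / p))^2"
  have "K > 0" unfolding K_def using \<open>p > 0\<close> by (simp add: add_pos_nonneg)
  show ?thesis
  proof (intro exI[of _ "1 / K"] conjI allI impI)
    fix W W' assume "H1_Gamma N W W' \<and> in_L2c N p W"
    then have edges: "\<And>j. j < N \<Longrightarrow> H1_half (W j) (W' j)"
      and vertex: "\<And>j. j < N \<Longrightarrow> W j 0 = W 0 0"
      and orthogonal: "(\<Sum>j<N. LBINT x:{0..}. W j x * phi p x) = 0"
      unfolding H1_Gamma_def in_L2c_def by blast+
    have "H1_norm_sq N W W' \<le> (\<Sum>j<N. K * (LBINT x:{0..}. Lminus_density p (W j) (W' j) x)
        + 2 * (p + 1) * W 0 0 * (LBINT x:{0..}. W j x * phi p x))"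
      unfolding H1_norm_sq_def
    proof (rule sum_mono)
      fix j assume "j \<in> {..<N}"
      then show "(LBINT x:{0..}. (W' j x)^2 + (W j x)^2) \<le> K * (LBINT x:{0..}. Lminus_density p (W j) (W' j) x)
          + 2 * (p + 1) * W 0 0 * (LBINT x:{0..}. W j x * phi p x)"
        using edge_estimate[OF \<open>p > 0\<close> edges, of j] vertex[of j] unfolding K_def by simp
    qed
    also have "\<dots> = K * Lminus_form N p W W'"
      using orthogonal
      by (simp add: Lminus_form_def Lminus_density_def sum.distrib sum_distrib_left[symmetric])
    finally show "1 / K * H1_norm_sq N W W' \<le> Lminus_form N p W W'"
      using \<open>K > 0\<close> by (simp add: field_simps)
  qed (use \<open>K > 0\<close> in simp)
qed

end
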